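(* Let $1\le r\le n$, let $B^{(1)},\dots,B^{(r)}\in\mathbb{C}^{n\times n}$ be Hermitian, and let $\tilde g(U)=\sum_{q=1}^ru_q^HB^{(q)}u_q$ for $U=(u_1,\dots,u_n)\in\mathcal{U}_n$. Let $U\in\mathcal{U}_n$ and $1\le i<j\le n$ with $i\le r$. Then there exist a real symmetric $M\in\mathbb{R}^{3\times3}$ and $C\in\mathbb{R}$ such that $\tilde g(UG_{ij}(\Psi(\theta,\phi)))=z_{1,1}(\theta,\phi)^TMz_{1,1}(\theta,\phi)+C$ for all $\theta,\phi\in\mathbb{R}$.
   Context: $\mathcal{U}_n$ is the group of $n\times n$ unitary matrices. $G_{ij}(\Psi)$ is the $n\times n$ identity with entries $(i,i),(i,j),(j,i),(j,j)$ replaced by $\Psi_{11},\Psi_{12},\Psi_{21},\Psi_{22}$; $\Psi(\theta,\phi)=\begin{bmatrix}\cos\theta&-\sin\theta e^{\mathrm{i}\phi}\\ \sin\theta e^{-\mathrm{i}\phi}&\cos\theta\end{bmatrix}$; $z_{1,1}(\theta,\phi)=(\cos\theta,-\sin\theta\cos\phi,-\sin\theta\sin\phi)^T$. *)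

theory Defs
  imports "Jordan_Normal_Form.Schur_Decomposition"
begin

(* Indices are 0-based: rows/columns of an n x n matrix are 0..n-1. *)

definition unitary_mat :: "nat \<Rightarrow> complex mat \<Rightarrow> bool" where
  "unitary_mat n U \<longleftrightarrow> U \<in> carrier_mat n n \<and> mat_adjoint U * U = 1\<^sub>m n"

definition hermitian_mat :: "nat \<Rightarrow> complex mat \<Rightarrow> bool" where
  "hermitian_mat n B \<longleftrightarrow> B \<in> carrier_mat n n \<and> mat_adjoint B = B"

definition Psi :: "real \<Rightarrow> real \<Rightarrow> complex mat" where
  "Psi \<theta> \<phi> = mat_of_rows_list 2
     [[complex_of_real (cos \<theta>), - complex_of_real (sin \<theta>) * cis \<phi>],
      [complex_of_real (sin \<theta>) * cis (- \<phi>), complex_of_real (cos \<theta>)]]"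

definition Givens :: "nat \<Rightarrow> nat \<Rightarrow> nat \<Rightarrow> complex mat \<Rightarrow> complex mat" where
  "Givens n i j P = mat n n (\<lambda>(a, b).
      if a = i \<and> b = i then P $$ (0, 0)
      else if a = i \<and> b = j then P $$ (0, 1)
      else if a = j \<and> b = i then P $$ (1, 0)
      else if a = j \<and> b = j then P $$ (1, 1)
      else if a = b then 1 else 0)"

definition z11 :: "real \<Rightarrow> real \<Rightarrow> real vec" where
  "z11 \<theta> \<phi> = vec_of_list [cos \<theta>, - sin \<theta> * cos \<phi>, - sin \<theta> * sin \<phi>]"

text \<open>g~(U) = sum_{q=1}^r u_q^H B^(q) u_q, where u_q is the q-th column of U
  (0-based here: q = 0..r-1, B q is B^(q+1)).\<close>
definition gtilde :: "nat \<Rightarrow> (nat \<Rightarrow> complex mat) \<Rightarrow> complex mat \<Rightarrow> complex" where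
  "gtilde r B U = (\<Sum>q<r. conjugate (col U q) \<bullet> (B q *\<^sub>v col U q))"

end

theory Submission
  imports Defs
begin

(* Right multiplication by G_ij(Psi(theta, phi)) only touches columns i and j of U, which become
   cos theta u_i + sin theta e^(-i phi) u_j  and  -sin theta e^(i phi) u_i + cos theta u_j.
   For Hermitian B the quadratic form of such a combination has the shape
   a cos^2 theta + g sin^2 theta + 2 cos theta sin theta Re (e^(-i phi) w), and since
   sin^2 theta = (sin theta cos phi)^2 + (sin theta sin phi)^2 every function of this shape is
   z^T M z for z = z11(theta, phi) and an explicit symmetric M.  The other columns contribute
   constants, and functions of the form z^T M z + C are closed under sums. *)

definition sesq_form :: "complex mat \<Rightarrow> complex vec \<Rightarrow> complex vec \<Rightarrow> complex" where
  "sesq_form A x y = conjugate x \<bullet> (A *\<^sub>v y)"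

lemma sesq_form_sum:
  assumes "A \<in> carrier_mat n n" "x \<in> carrier_vec n" "y \<in> carrier_vec n"
  shows "sesq_form A x y = (\<Sum>a<n. \<Sum>b<n. cnj (x $ a) * A $$ (a, b) * y $ b)"
  using assms unfolding sesq_form_def
  by (simp add: scalar_prod_def sum_distrib_left mult.assoc lessThan_atLeast0)

lemma hermitian_mat_entry:
  assumes "hermitian_mat n A" "a < n" "b < n"
  shows "A $$ (a, b) = cnj (A $$ (b, a))"
proof -
  have "A \<in> carrier_mat n n" and "mat_adjoint A = A"
    using assms(1) unfolding hermitian_mat_def by auto
  then have "A $$ (a, b) = mat_adjoint A $$ (a, b)" by simp
  also have "\<dots> = cnj (A $$ (b, a))"
    using \<open>A \<in> carrier_mat n n\<close> assms(2,3) unfolding mat_adjoint_def by (simp add: mat_of_rows_index)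
  finally show ?thesis .
qed

lemma sesq_form_swap:
  assumes "hermitian_mat n A" "x \<in> carrier_vec n" "y \<in> carrier_vec n"
  shows "sesq_form A y x = cnj (sesq_form A x y)"
proof -
  have A: "A \<in> carrier_mat n n" using assms(1) unfolding hermitian_mat_def by simp
  have "sesq_form A y x = (\<Sum>a<n. \<Sum>b<n. cnj (y $ a) * cnj (A $$ (b, a)) * x $ b)"
    unfolding sesq_form_sum[OF A assms(3,2)]
  proof (intro sum.cong refl)
    fix a b assume "a \<in> {..<n}" "b \<in> {..<n}"
    then show "cnj (y $ a) * A $$ (a, b) * x $ b = cnj (y $ a) * cnj (A $$ (b, a)) * x $ b"
      using hermitian_mat_entry[OF assms(1), of a b] by simp
  qed
  also have "\<dots> = (\<Sum>b<n. \<Sum>a<n. cnj (y $ a) * cnj (A $$ (b, a)) * x $ b)"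
    by (rule sum.swap)
  also have "\<dots> = cnj (sesq_form A x y)"
    unfolding sesq_form_sum[OF A assms(2,3)] cnj_sum complex_cnj_mult complex_cnj_cnj
    by (intro sum.cong refl) (simp only: mult.commute mult.left_commute)
  finally show ?thesis .
qed

lemma sesq_form_diag_real:
  assumes "hermitian_mat n A" "x \<in> carrier_vec n"
  shows "sesq_form A x x = complex_of_real (Re (sesq_form A x x))"
  using sesq_form_swap[OF assms assms(2)] by (metis Reals_cnj_iff complex_is_Real_iff of_real_Re)

lemma sesq_form_add_left:
  "A \<in> carrier_mat n n \<Longrightarrow> x \<in> carrier_vec n \<Longrightarrow> y \<in> carrier_vec n \<Longrightarrow> z \<in> carrier_vec n \<Longrightarrow>
    sesq_form A (x + y) z = sesq_form A x z + sesq_form A y z"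
  unfolding sesq_form_def by (simp add: conjugate_add_vec add_scalar_prod_distrib[of _ n])

lemma sesq_form_add_right:
  "A \<in> carrier_mat n n \<Longrightarrow> x \<in> carrier_vec n \<Longrightarrow> y \<in> carrier_vec n \<Longrightarrow> z \<in> carrier_vec n \<Longrightarrow>
    sesq_form A x (y + z) = sesq_form A x y + sesq_form A x z"
  unfolding sesq_form_def by (simp add: mult_add_distrib_mat_vec scalar_prod_add_distrib[of _ n])

lemma sesq_form_smult_left:
  "A \<in> carrier_mat n n \<Longrightarrow> x \<in> carrier_vec n \<Longrightarrow> z \<in> carrier_vec n \<Longrightarrow>
    sesq_form A (p \<cdot>\<^sub>v x) z = cnj p * sesq_form A x z"
  unfolding sesq_form_def by (simp add: conjugate_smult_vec)

lemma sesq_form_smult_right: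
  "A \<in> carrier_mat n n \<Longrightarrow> x \<in> carrier_vec n \<Longrightarrow> z \<in> carrier_vec n \<Longrightarrow>
    sesq_form A x (p \<cdot>\<^sub>v z) = p * sesq_form A x z"
  unfolding sesq_form_def by (simp add: mult_mat_vec)

lemma sesq_form_combination:
  assumes "A \<in> carrier_mat n n" "x \<in> carrier_vec n" "y \<in> carrier_vec n"
  shows "sesq_form A (p \<cdot>\<^sub>v x + t \<cdot>\<^sub>v y) (p \<cdot>\<^sub>v x + t \<cdot>\<^sub>v y) =
    cnj p * p * sesq_form A x x + cnj p * t * sesq_form A x y
    + cnj t * p * sesq_form A y x + cnj t * t * sesq_form A y y"
  using assms
  by (simp add: sesq_form_add_left[of A n] sesq_form_add_right[of A n]
      sesq_form_smult_left[of A n] sesq_form_smult_right[of A n] algebra_simps)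

lemma hermitian_sesq_form_combination:
  assumes "hermitian_mat n A" "x \<in> carrier_vec n" "y \<in> carrier_vec n"
  shows "Re (sesq_form A (p \<cdot>\<^sub>v x + t \<cdot>\<^sub>v y) (p \<cdot>\<^sub>v x + t \<cdot>\<^sub>v y)) =
    (cmod p)\<^sup>2 * Re (sesq_form A x x) + (cmod t)\<^sup>2 * Re (sesq_form A y y)
    + 2 * Re (cnj p * t * sesq_form A x y)"
proof -
  have A: "A \<in> carrier_mat n n" using assms(1) unfolding hermitian_mat_def by simp
  have diag: "Re (cnj z * z * sesq_form A v v) = (cmod z)\<^sup>2 * Re (sesq_form A v v)"
    if "v \<in> carrier_vec n" for z v
    by (subst sesq_form_diag_real[OF assms(1) that]) (simp add: cmod_power2, simp add: power2_eq_square)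
  have swap: "cnj t * p * sesq_form A y x = cnj (cnj p * t * sesq_form A x y)"
    using sesq_form_swap[OF assms] by simp
  have "Re (sesq_form A (p \<cdot>\<^sub>v x + t \<cdot>\<^sub>v y) (p \<cdot>\<^sub>v x + t \<cdot>\<^sub>v y)) =
      Re (cnj p * p * sesq_form A x x) + Re (cnj p * t * sesq_form A x y)
      + Re (cnj (cnj p * t * sesq_form A x y)) + Re (cnj t * t * sesq_form A y y)"
    unfolding sesq_form_combination[OF A assms(2,3)] swap by (simp only: plus_complex.sel)
  then show ?thesis
    unfolding diag[OF assms(2)] diag[OF assms(3)] cnj.sel by linarith
qed

lemma hermitian_sesq_form_rotation:
  assumes "hermitian_mat n A" "x \<in> carrier_vec n" "y \<in> carrier_vec n"
  shows "Re (sesq_form A (complex_of_real c \<cdot>\<^sub>v x + (complex_of_real s * cis (- \<phi>)) \<cdot>\<^sub>v y)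
                          (complex_of_real c \<cdot>\<^sub>v x + (complex_of_real s * cis (- \<phi>)) \<cdot>\<^sub>v y)) =
      c\<^sup>2 * Re (sesq_form A x x) + s\<^sup>2 * Re (sesq_form A y y)
      + 2 * c * s * Re (cis (- \<phi>) * sesq_form A x y)"
    and "Re (sesq_form A ((- complex_of_real s * cis \<phi>) \<cdot>\<^sub>v x + complex_of_real c \<cdot>\<^sub>v y)
                          ((- complex_of_real s * cis \<phi>) \<cdot>\<^sub>v x + complex_of_real c \<cdot>\<^sub>v y)) =
      s\<^sup>2 * Re (sesq_form A x x) + c\<^sup>2 * Re (sesq_form A y y)
      - 2 * c * s * Re (cis (- \<phi>) * sesq_form A x y)"
  unfolding hermitian_sesq_form_combination[OF assms]
  by (simp add: norm_mult cis_cnj; simp add: algebra_simps)+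

definition z11_form_mat :: "real \<Rightarrow> real \<Rightarrow> complex \<Rightarrow> real mat" where
  "z11_form_mat a g w =
     mat_of_rows_list 3 [[a, - Re w, - Im w], [- Re w, g, 0], [- Im w, 0, g]]"

lemma z11_form_mat_carrier: "z11_form_mat a g w \<in> carrier_mat 3 3"
  unfolding z11_form_mat_def mat_of_rows_list_def by (simp add: numeral_3_eq_3)

lemma z11_form_mat_symmetric: "transpose_mat (z11_form_mat a g w) = z11_form_mat a g w"
  unfolding z11_form_mat_def
  by (rule eq_matI) (auto simp: mat_of_rows_list_def less_Suc_eq numeral_3_eq_3)

lemma z11_form_mat_quadratic:
  "z11 \<theta> \<phi> \<bullet> (z11_form_mat a g w *\<^sub>v z11 \<theta> \<phi>) =
    a * (cos \<theta>)\<^sup>2 + g * (sin \<theta>)\<^sup>2 + 2 * cos \<theta> * sin \<theta> * Re (cis (- \<phi>) * w)"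
proof -
  have sin_split: "(sin \<theta>)\<^sup>2 = (sin \<theta> * cos \<phi>)\<^sup>2 + (sin \<theta> * sin \<phi>)\<^sup>2"
    by (simp add: power_mult_distrib flip: distrib_left)
  show ?thesis
    unfolding sin_split
    by (simp add: z11_def z11_form_mat_def scalar_prod_def mat_of_rows_list_def
        eval_nat_numeral row_def algebra_simps power2_eq_square)
qed

definition z11_quadratic :: "(real \<Rightarrow> real \<Rightarrow> real) \<Rightarrow> bool" where
  "z11_quadratic f \<longleftrightarrow> (\<exists>M C. M \<in> carrier_mat 3 3 \<and> transpose_mat M = M \<and>
     (\<forall>\<theta> \<phi>. f \<theta> \<phi> = z11 \<theta> \<phi> \<bullet> (M *\<^sub>v z11 \<theta> \<phi>) + C))"

lemma z11_carrier: "z11 \<theta> \<phi> \<in> carrier_vec 3"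
  unfolding z11_def carrier_vec_def by (simp del: vec_of_list_Cons)

lemma z11_quadratic_trig:
  "z11_quadratic (\<lambda>\<theta> \<phi>.
     a * (cos \<theta>)\<^sup>2 + g * (sin \<theta>)\<^sup>2 + 2 * cos \<theta> * sin \<theta> * Re (cis (- \<phi>) * w) + C)"
  unfolding z11_quadratic_def z11_form_mat_quadratic[symmetric]
  by (intro exI[of _ "z11_form_mat a g w"] exI[of _ C])
    (simp add: z11_form_mat_carrier z11_form_mat_symmetric)

lemma z11_quadratic_const: "z11_quadratic (\<lambda>\<theta> \<phi>. C)"
  using z11_quadratic_trig[of 0 0 0 C] by simp

lemma z11_quadratic_add:
  assumes "z11_quadratic f" "z11_quadratic g"
  shows "z11_quadratic (\<lambda>\<theta> \<phi>. f \<theta> \<phi> + g \<theta> \<phi>)"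
proof -
  obtain M C where M: "M \<in> carrier_mat 3 3" "transpose_mat M = M"
    and f: "\<And>\<theta> \<phi>. f \<theta> \<phi> = z11 \<theta> \<phi> \<bullet> (M *\<^sub>v z11 \<theta> \<phi>) + C"
    using assms(1) unfolding z11_quadratic_def by blast
  obtain N D where N: "N \<in> carrier_mat 3 3" "transpose_mat N = N"
    and g: "\<And>\<theta> \<phi>. g \<theta> \<phi> = z11 \<theta> \<phi> \<bullet> (N *\<^sub>v z11 \<theta> \<phi>) + D"
    using assms(2) unfolding z11_quadratic_def by blast
  have sum_eq: "f \<theta> \<phi> + g \<theta> \<phi> = z11 \<theta> \<phi> \<bullet> ((M + N) *\<^sub>v z11 \<theta> \<phi>) + (C + D)" for \<theta> \<phi>
    unfolding f g add_mult_distrib_mat_vec[OF M(1) N(1) z11_carrier]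
    using M(1) N(1) z11_carrier by (simp add: scalar_prod_add_distrib[of _ 3])
  have "transpose_mat (M + N) = M + N"
    using M N by (simp add: transpose_add)
  then show ?thesis
    unfolding z11_quadratic_def using M(1) N(1)
    by (intro exI[of _ "M + N"] exI[of _ "C + D"]) (simp add: sum_eq)
qed

lemma z11_quadratic_sum:
  assumes "finite S" "\<And>q. q \<in> S \<Longrightarrow> z11_quadratic (f q)"
  shows "z11_quadratic (\<lambda>\<theta> \<phi>. \<Sum>q\<in>S. f q \<theta> \<phi>)"
  using assms by (induction S rule: finite_induct) (simp_all add: z11_quadratic_const z11_quadratic_add)

lemma mult_mat_vec_unit_vec:
  fixes U :: "'a :: semiring_1 mat"
  assumes "U \<in> carrier_mat m n" "k < n"
  shows "U *\<^sub>v unit_vec n k = col U k"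
  using assms by (intro eq_vecI) (simp_all add: row_def)

lemma col_Givens:
  assumes "i < j" "j < n"
  shows "col (Givens n i j P) i = P $$ (0, 0) \<cdot>\<^sub>v unit_vec n i + P $$ (1, 0) \<cdot>\<^sub>v unit_vec n j"
    and "col (Givens n i j P) j = P $$ (0, 1) \<cdot>\<^sub>v unit_vec n i + P $$ (1, 1) \<cdot>\<^sub>v unit_vec n j"
    and "k < n \<Longrightarrow> k \<noteq> i \<Longrightarrow> k \<noteq> j \<Longrightarrow> col (Givens n i j P) k = unit_vec n k"
  using assms by (auto intro!: eq_vecI simp: Givens_def)

lemma col_mult_Givens:
  assumes U: "U \<in> carrier_mat n n" and "i < j" "j < n"
  shows "col (U * Givens n i j P) i = P $$ (0, 0) \<cdot>\<^sub>v col U i + P $$ (1, 0) \<cdot>\<^sub>v col U j"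
    and "col (U * Givens n i j P) j = P $$ (0, 1) \<cdot>\<^sub>v col U i + P $$ (1, 1) \<cdot>\<^sub>v col U j"
    and "k < n \<Longrightarrow> k \<noteq> i \<Longrightarrow> k \<noteq> j \<Longrightarrow> col (U * Givens n i j P) k = col U k"
proof -
  have G: "Givens n i j P \<in> carrier_mat n n" unfolding Givens_def by simp
  have col_mult: "col (U * Givens n i j P) k = U *\<^sub>v col (Givens n i j P) k" if "k < n" for k
    using col_mult2[OF U G that] .
  note unit = mult_mat_vec_unit_vec[OF U]
  show "col (U * Givens n i j P) i = P $$ (0, 0) \<cdot>\<^sub>v col U i + P $$ (1, 0) \<cdot>\<^sub>v col U j"
    using assms U by (simp add: col_mult col_Givens mult_add_distrib_mat_vec[OF U] mult_mat_vec[OF U] unit)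
  show "col (U * Givens n i j P) j = P $$ (0, 1) \<cdot>\<^sub>v col U i + P $$ (1, 1) \<cdot>\<^sub>v col U j"
    using assms U by (simp add: col_mult col_Givens mult_add_distrib_mat_vec[OF U] mult_mat_vec[OF U] unit)
  show "k < n \<Longrightarrow> k \<noteq> i \<Longrightarrow> k \<noteq> j \<Longrightarrow> col (U * Givens n i j P) k = col U k"
    using assms by (simp add: col_mult col_Givens unit)
qed

lemma Psi_index:
  "Psi \<theta> \<phi> $$ (0, 0) = complex_of_real (cos \<theta>)"
  "Psi \<theta> \<phi> $$ (0, 1) = - complex_of_real (sin \<theta>) * cis \<phi>"
  "Psi \<theta> \<phi> $$ (1, 0) = complex_of_real (sin \<theta>) * cis (- \<phi>)"
  "Psi \<theta> \<phi> $$ (1, 1) = complex_of_real (cos \<theta>)"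
  unfolding Psi_def mat_of_rows_list_def by simp_all

lemma gtilde_eq_sum_Re:
  assumes "r \<le> n" "\<And>q. q < r \<Longrightarrow> hermitian_mat n (B q)" "V \<in> carrier_mat n n"
  shows "gtilde r B V = complex_of_real (\<Sum>q<r. Re (sesq_form (B q) (col V q) (col V q)))"
  unfolding gtilde_def of_real_sum
proof (intro sum.cong refl)
  fix q assume "q \<in> {..<r}"
  then have "hermitian_mat n (B q)" "col V q \<in> carrier_vec n"
    using assms by auto
  from sesq_form_diag_real[OF this]
  show "conjugate (col V q) \<bullet> (B q *\<^sub>v col V q) = complex_of_real (Re (sesq_form (B q) (col V q) (col V q)))"
    unfolding sesq_form_def .
qed

lemma z11_quadratic_Givens_column:
  assumes A: "hermitian_mat n A" and U: "U \<in> carrier_mat n n"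
    and ij: "i < j" "j < n" and "k < n"
  shows "z11_quadratic (\<lambda>\<theta> \<phi>. Re (sesq_form A (col (U * Givens n i j (Psi \<theta> \<phi>)) k)
                                         (col (U * Givens n i j (Psi \<theta> \<phi>)) k)))"
proof -
  have x: "col U i \<in> carrier_vec n" and y: "col U j \<in> carrier_vec n"
    using U ij by auto
  define \<alpha> where "\<alpha> = Re (sesq_form A (col U i) (col U i))"
  define \<gamma> where "\<gamma> = Re (sesq_form A (col U j) (col U j))"
  define \<beta> where "\<beta> = sesq_form A (col U i) (col U j)"
  note rotation = hermitian_sesq_form_rotation[OF A x y, folded \<alpha>_def \<gamma>_def \<beta>_def]
  note col_Psi = col_mult_Givens[OF U ij, where P = "Psi \<theta> \<phi>" for \<theta> \<phi>, unfolded Psi_index]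
  consider "k = i" | "k = j" | "k \<noteq> i" "k \<noteq> j" by blast
  then show ?thesis
  proof cases
    case 1
    have "Re (sesq_form A (col (U * Givens n i j (Psi \<theta> \<phi>)) k) (col (U * Givens n i j (Psi \<theta> \<phi>)) k))
        = \<alpha> * (cos \<theta>)\<^sup>2 + \<gamma> * (sin \<theta>)\<^sup>2 + 2 * cos \<theta> * sin \<theta> * Re (cis (- \<phi>) * \<beta>) + 0"
      for \<theta> \<phi>
      unfolding 1 col_Psi(1) rotation(1) by (simp add: algebra_simps)
    then show ?thesis
      using z11_quadratic_trig[of \<alpha> \<gamma> \<beta> 0] by simp
  next
    case 2
    have "Re (sesq_form A (col (U * Givens n i j (Psi \<theta> \<phi>)) k) (col (U * Givens n i j (Psi \<theta> \<phi>)) k))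
        = \<gamma> * (cos \<theta>)\<^sup>2 + \<alpha> * (sin \<theta>)\<^sup>2 + 2 * cos \<theta> * sin \<theta> * Re (cis (- \<phi>) * - \<beta>) + 0"
      for \<theta> \<phi>
      unfolding 2 col_Psi(2) rotation(2) by (simp add: algebra_simps)
    then show ?thesis
      using z11_quadratic_trig[of \<gamma> \<alpha> "- \<beta>" 0] by simp
  next
    case 3
    then have "col (U * Givens n i j (Psi \<theta> \<phi>)) k = col U k" for \<theta> \<phi>
      using \<open>k < n\<close> col_mult_Givens(3)[OF U ij] by blast
    then show ?thesis
      using z11_quadratic_const by simp
  qed
qed

theorem corollary3p6:
  fixes n r i j :: nat and B :: "nat \<Rightarrow> complex mat" and U :: "complex mat"
  assumes "1 \<le> r" and "r \<le> n"
    and "\<And>q. q < r \<Longrightarrow> hermitian_mat n (B q)"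
    and "unitary_mat n U"
    and "i < j" and "j < n" and "i < r"
  shows "\<exists>M :: real mat. \<exists>C :: real.
           M \<in> carrier_mat 3 3 \<and> transpose_mat M = M \<and>
           (\<forall>\<theta> \<phi> :: real.
              gtilde r B (U * Givens n i j (Psi \<theta> \<phi>)) =
              complex_of_real (z11 \<theta> \<phi> \<bullet> (M *\<^sub>v z11 \<theta> \<phi>) + C))"
proof -
  define V where "V \<theta> \<phi> = U * Givens n i j (Psi \<theta> \<phi>)" for \<theta> \<phi>
  have U: "U \<in> carrier_mat n n" using assms(4) unfolding unitary_mat_def by simp
  then have V: "V \<theta> \<phi> \<in> carrier_mat n n" for \<theta> \<phi>
    unfolding V_def Givens_def by simp
  have "z11_quadratic (\<lambda>\<theta> \<phi>. \<Sum>q<r. Re (sesq_form (B q) (col (V \<theta> \<phi>) q) (col (V \<theta> \<phi>) q)))"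
    unfolding V_def using assms(2,3,5,6) U
    by (intro z11_quadratic_sum z11_quadratic_Givens_column) auto
  then obtain M C where M: "M \<in> carrier_mat 3 3" "transpose_mat M = M" and sum_eq:
    "\<And>\<theta> \<phi>. (\<Sum>q<r. Re (sesq_form (B q) (col (V \<theta> \<phi>) q) (col (V \<theta> \<phi>) q)))
      = z11 \<theta> \<phi> \<bullet> (M *\<^sub>v z11 \<theta> \<phi>) + C"
    unfolding z11_quadratic_def by blast
  have "gtilde r B (V \<theta> \<phi>) = complex_of_real (z11 \<theta> \<phi> \<bullet> (M *\<^sub>v z11 \<theta> \<phi>) + C)" for \<theta> \<phi>
    by (simp only: gtilde_eq_sum_Re[of r n B, OF assms(2,3) V] sum_eq)
  with M show ?thesis
    unfolding V_def by blast
qed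

end
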